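(* Let $G$ be a non-complete double-critical $k$-chromatic graph. If $H$ is a connected subgraph of $G$ with at least $2$ vertices, then the graph $G/V(H)$ obtained from $G$ by contracting $V(H)$ into a single vertex is $(k-1)$-colourable.
   Context: All graphs are finite and simple. A graph $G$ is (vertex-)critical if $\chi(G-v)<\chi(G)$ for every vertex $v\in V(G)$. A critical graph $G$ is double-critical if $\chi(G-x-y)\le\chi(G)-2$ for every edge $xy\in E(G)$. For $U\subseteq V(G)$ with $G[U]$ connected, $G/U$ denotes the graph obtained from $G$ by contracting $U$ into one vertex (resulting in a simple graph). *)

theory Defs
  imports Main
begin

definition simple_graph :: "'a set \<Rightarrow> ('a \<Rightarrow> 'a \<Rightarrow> bool) \<Rightarrow> bool" where
  "simple_graph V E \<longleftrightarrow> finite V \<and>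
     (\<forall>x y. E x y \<longrightarrow> x \<in> V \<and> y \<in> V \<and> x \<noteq> y \<and> E y x)"

definition colourable :: "'a set \<Rightarrow> ('a \<Rightarrow> 'a \<Rightarrow> bool) \<Rightarrow> nat \<Rightarrow> bool" where
  "colourable V E k \<longleftrightarrow>
     (\<exists>f :: 'a \<Rightarrow> nat. (\<forall>x\<in>V. f x < k) \<and> (\<forall>x\<in>V. \<forall>y\<in>V. E x y \<longrightarrow> f x \<noteq> f y))"

definition chromatic :: "'a set \<Rightarrow> ('a \<Rightarrow> 'a \<Rightarrow> bool) \<Rightarrow> nat" where
  "chromatic V E = (LEAST k. colourable V E k)"

text \<open>G - v and G - x - y are the induced subgraphs on V - {v}, V - {x,y}.\<close>
definition critical :: "'a set \<Rightarrow> ('a \<Rightarrow> 'a \<Rightarrow> bool) \<Rightarrow> bool" where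
  "critical V E \<longleftrightarrow> (\<forall>v\<in>V. chromatic (V - {v}) E < chromatic V E)"

definition double_critical :: "'a set \<Rightarrow> ('a \<Rightarrow> 'a \<Rightarrow> bool) \<Rightarrow> bool" where
  "double_critical V E \<longleftrightarrow> critical V E \<and>
     (\<forall>x\<in>V. \<forall>y\<in>V. E x y \<longrightarrow> chromatic (V - {x, y}) E + 2 \<le> chromatic V E)"

definition complete_graph :: "'a set \<Rightarrow> ('a \<Rightarrow> 'a \<Rightarrow> bool) \<Rightarrow> bool" where
  "complete_graph V E \<longleftrightarrow> (\<forall>x\<in>V. \<forall>y\<in>V. x \<noteq> y \<longrightarrow> E x y)"

definition subgraph :: "'a set \<Rightarrow> ('a \<Rightarrow> 'a \<Rightarrow> bool) \<Rightarrow> 'a set \<Rightarrow> ('a \<Rightarrow> 'a \<Rightarrow> bool) \<Rightarrow> bool" where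
  "subgraph VH EH V E \<longleftrightarrow> simple_graph VH EH \<and> VH \<subseteq> V \<and> (\<forall>x y. EH x y \<longrightarrow> E x y)"

definition connected_graph :: "'a set \<Rightarrow> ('a \<Rightarrow> 'a \<Rightarrow> bool) \<Rightarrow> bool" where
  "connected_graph V E \<longleftrightarrow>
     (\<forall>x\<in>V. \<forall>y\<in>V. (\<lambda>a b. E a b \<and> a \<in> V \<and> b \<in> V)\<^sup>*\<^sup>* x y)"

text \<open>Contraction G/U: vertices outside U are kept as Some v, U becomes the
  single new vertex None; the result is simple (no loops, no multi-edges).\<close>
definition contract_V :: "'a set \<Rightarrow> 'a set \<Rightarrow> 'a option set" where
  "contract_V V U = insert None (Some ` (V - U))"

definition contract_E :: "('a \<Rightarrow> 'a \<Rightarrow> bool) \<Rightarrow> 'a set \<Rightarrow> 'a option \<Rightarrow> 'a option \<Rightarrow> bool" where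
  "contract_E E U a b =
     (case (a, b) of
        (Some x, Some y) \<Rightarrow> x \<notin> U \<and> y \<notin> U \<and> E x y
      | (None, Some y) \<Rightarrow> y \<notin> U \<and> (\<exists>u\<in>U. E u y)
      | (Some x, None) \<Rightarrow> x \<notin> U \<and> (\<exists>u\<in>U. E x u)
      | (None, None) \<Rightarrow> False)"

end

theory Submission
  imports Defs
begin

text \<open>H contains an edge ac of G, so by double-criticality G - a - c, and hence its
  subgraph G - V(H), is (k - 2)-colourable; a fresh colour for the contracted vertex gives
  a (k - 1)-colouring of G/V(H).\<close>

lemma colourable_mono:
  assumes "colourable W E n" "W' \<subseteq> W" "n \<le> m"
  shows "colourable W' E m"
  using assms unfolding colourable_def by (meson order_less_le_trans subsetD)

lemma simple_graph_colourable:
  assumes "simple_graph V E"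
  shows "\<exists>n. colourable W E n"
proof -
  have "finite (W \<inter> V)" using assms unfolding simple_graph_def by auto
  then obtain f :: "_ \<Rightarrow> nat" and n where f: "f ` (W \<inter> V) = {..<n}" "inj_on f (W \<inter> V)"
    using finite_imp_inj_to_nat_seg by (metis lessThan_def)
  \<comment> \<open>vertices outside V have no edges, so they may all share the colour n\<close>
  have "colourable W E (Suc n)"
    unfolding colourable_def
  proof (intro exI[of _ "\<lambda>x. if x \<in> V then f x else n"] conjI ballI impI)
    fix x assume "x \<in> W"
    then show "(if x \<in> V then f x else n) < Suc n"
      using f(1) by (auto simp: image_subset_iff less_Suc_eq)
  next
    fix x y assume "x \<in> W" "y \<in> W" "E x y"
    moreover have "x \<in> V" "y \<in> V" "x \<noteq> y"
      using \<open>E x y\<close> assms unfolding simple_graph_def by auto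
    ultimately show "(if x \<in> V then f x else n) \<noteq> (if y \<in> V then f y else n)"
      using f(2) unfolding inj_on_def by auto
  qed
  then show ?thesis ..
qed

lemma colourable_chromatic:
  assumes "simple_graph V E"
  shows "colourable W E (chromatic W E)"
  using simple_graph_colourable[OF assms] unfolding chromatic_def by (blast intro: LeastI)

lemma colourable_contract:
  assumes "colourable (V - U) E n"
  shows "colourable (contract_V V U) (contract_E E U) (Suc n)"
proof -
  obtain f where f: "\<forall>x\<in>V - U. f x < n" "\<forall>x\<in>V - U. \<forall>y\<in>V - U. E x y \<longrightarrow> f x \<noteq> f y"
    using assms unfolding colourable_def by blast
  define g where "g = case_option n f"
  have "\<forall>x\<in>contract_V V U. g x < Suc n"
    using f(1) unfolding g_def contract_V_def by (auto simp: less_Suc_eq)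
  moreover have "g x \<noteq> g y"
    if "x \<in> contract_V V U" "y \<in> contract_V V U" "contract_E E U x y" for x y
    using that f unfolding g_def contract_V_def contract_E_def
    by (cases x; cases y) (auto dest: less_irrefl_nat)
  ultimately show ?thesis unfolding colourable_def by blast
qed

lemma connected_graph_has_edge:
  assumes "connected_graph V E" "card V \<ge> 2"
  obtains a c where "E a c" "a \<in> V" "c \<in> V"
proof -
  have "finite V" using assms(2) card.infinite by fastforce
  then obtain a b where ab: "a \<in> V" "b \<in> V" "a \<noteq> b"
    using assms(2) card_le_Suc0_iff_eq by (metis not_less_eq_eq numeral_2_eq_2)
  let ?R = "\<lambda>x y. E x y \<and> x \<in> V \<and> y \<in> V"
  have "?R\<^sup>*\<^sup>* a b" using assms(1) ab unfolding connected_graph_def by blast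
  then show ?thesis
    using ab(3) that by (cases rule: converse_rtranclpE) auto
qed

theorem proposition3:
  fixes V :: "'a set" and E :: "'a \<Rightarrow> 'a \<Rightarrow> bool" and k :: nat
    and VH :: "'a set" and EH :: "'a \<Rightarrow> 'a \<Rightarrow> bool"
  assumes "simple_graph V E"
    and "\<not> complete_graph V E"
    and "double_critical V E"
    and "chromatic V E = k"
    and "subgraph VH EH V E"
    and "connected_graph VH EH"
    and "card VH \<ge> 2"
  shows "colourable (contract_V V VH) (contract_E E VH) (k - 1)"
proof -
  obtain a c where "EH a c" "a \<in> VH" "c \<in> VH"
    using connected_graph_has_edge[OF assms(6,7)] .
  with assms(5) have "E a c" "a \<in> V" "c \<in> V" "{a, c} \<subseteq> VH"
    unfolding subgraph_def by auto
  with assms(3,4) have chromatic_le: "chromatic (V - {a, c}) E + 2 \<le> k"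
    unfolding double_critical_def by blast
  have "colourable (V - VH) E (k - 2)"
    by (rule colourable_mono[OF colourable_chromatic[OF assms(1), of "V - {a, c}"]])
      (use \<open>{a, c} \<subseteq> VH\<close> chromatic_le in auto)
  then have "colourable (contract_V V VH) (contract_E E VH) (Suc (k - 2))"
    by (rule colourable_contract)
  moreover have "Suc (k - 2) = k - 1" using chromatic_le by linarith
  ultimately show ?thesis by simp
qed

end
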